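(* Consider a charging station with a finite set $\mathcal{V}$ of electric vehicles (EVs) over discrete time slots $t\in\{1,\dots,T\}$, with the per-EV data and the set $\mathcal{F}_c$ described in the context. Let $(\{\hat p_{d,t}\}_t,\{\check p_{d,t}\}_t)$ be the upper and lower aggregate power trajectories obtained from problem P1 (in particular they belong to $\mathcal{F}_c$, together with some individual trajectories $\hat p^c_{v,t},\hat e_{v,t},\check p^c_{v,t},\check e_{v,t}$ witnessing membership). Then for every aggregate EV charging power trajectory $\{p_{d,t}\}_{t}$ satisfying $\check p_{d,t}\le p_{d,t}\le \hat p_{d,t}$ for all $t$, there always exists a disaggregate, feasible charging strategy for the individual EVs, i.e. individual charging powers $p^c_{v,t}$ and energy levels $e_{v,t}$ such that: $p_{d,t}=\sum_{v\in\mathcal{V}}p^c_{v,t}$ for all $t$; $0\le p^c_{v,t}\le \bar p_v$ for all $v$ and $t\in[t_v^a,t_v^d]$; $e_{v,t+1}=e_{v,t}+\eta_c p^c_{v,t}\Delta t$ for all $v$ and $t\neq T$; $e_{v,t_v^a}=e_v^a$ and $e_{v,t_v^d}\ge e_v^d$ for all $v$; $\underline e_v\le e_{v,t}\le \bar e_v$ for all $v,t$; and $p^c_{v,t}=0$ for all $v$ and $t\notin[t_v^a,t_v^d]$.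
   Context: Each EV $v\in\mathcal{V}$ has arrival time slot $t_v^a$, departure time slot $t_v^d$, initial energy $e_v^a$ at $t_v^a$, required energy $e_v^d$ at departure, maximum charging power $\bar p_v\ge 0$, energy bounds $\underline e_v\le \bar e_v$; $\eta_c>0$ is the charging efficiency and $\Delta t>0$ the slot length. The set $\mathcal{F}_c$ consists of all trajectories $\{\hat p_{d,t},\check p_{d,t}\}_t$ for which there exist $\hat p^c_{v,t},\hat e_{v,t},\check p^c_{v,t},\check e_{v,t}$ with: $\hat p_{d,t}=\sum_{v}\hat p^c_{v,t}$; $0\le\hat p^c_{v,t}\le\bar p_v$ for $t\in[t_v^a,t_v^d]$; $\hat e_{v,t+1}=\hat e_{v,t}+\eta_c\hat p^c_{v,t}\Delta t$ for $t\ne T$; $\hat e_{v,t_v^a}=e_v^a$, $\hat e_{v,t_v^d}\ge e_v^d$; $\underline e_v\le\hat e_{v,t}\le\bar e_v$; the identical constraints for the checked quantities $\check p_{d,t},\check p^c_{v,t},\check e_{v,t}$; $\check p_{d,t}\le\hat p_{d,t}$ for all $t$; and $\hat p^c_{v,t}=\check p^c_{v,t}=0$ for $t\notin[t_v^a,t_v^d]$. Problem P1 maximizes the long-run time-average expected value $\lim_{T\to\infty}\frac1T\sum_{t=1}^T\mathbb{E}[(\pi^e_t+\pi^c_t\rho_t)(\hat p_{d,t}-\check p_{d,t})]$ over $\mathcal{F}_c$, where $\pi^e_t$ is the electricity price, $\pi^c_t$ the carbon price and $\rho_t$ the grid carbon intensity at time $t$. *)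

theory Defs
  imports Complex_Main
begin

text \<open>For an EV v: arrival slot ta v, departure
slot td v, initial energy ea v, required energy ed v, maximum charging power pbar v,
energy bounds emin v and emax v; eta is the charging efficiency and dt the slot length.\<close>

definition ev_feasible ::
  "nat \<Rightarrow> real \<Rightarrow> real \<Rightarrow> nat \<Rightarrow> nat \<Rightarrow> real \<Rightarrow> real \<Rightarrow> real \<Rightarrow> real \<Rightarrow> real
   \<Rightarrow> (nat \<Rightarrow> real) \<Rightarrow> (nat \<Rightarrow> real) \<Rightarrow> bool" where
  "ev_feasible T eta dt ta td ea ed pbar emin emax pc e \<longleftrightarrow>
     (\<forall>t\<in>{ta..td}. 0 \<le> pc t \<and> pc t \<le> pbar) \<and>
     (\<forall>t\<in>{1..T}. t \<noteq> T \<longrightarrow> e (t+1) = e t + eta * pc t * dt) \<and>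
     e ta = ea \<and> e td \<ge> ed \<and>
     (\<forall>t\<in>{1..T}. emin \<le> e t \<and> e t \<le> emax) \<and>
     (\<forall>t\<in>{1..T}. t \<notin> {ta..td} \<longrightarrow> pc t = 0)"

definition disaggregates ::
  "'v set \<Rightarrow> nat \<Rightarrow> real \<Rightarrow> real \<Rightarrow> ('v \<Rightarrow> nat) \<Rightarrow> ('v \<Rightarrow> nat) \<Rightarrow> ('v \<Rightarrow> real)
   \<Rightarrow> ('v \<Rightarrow> real) \<Rightarrow> ('v \<Rightarrow> real) \<Rightarrow> ('v \<Rightarrow> real) \<Rightarrow> ('v \<Rightarrow> real)
   \<Rightarrow> (nat \<Rightarrow> real) \<Rightarrow> ('v \<Rightarrow> nat \<Rightarrow> real) \<Rightarrow> ('v \<Rightarrow> nat \<Rightarrow> real) \<Rightarrow> bool" where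
  "disaggregates V T eta dt ta td ea ed pbar emin emax pd pc e \<longleftrightarrow>
     (\<forall>t\<in>{1..T}. pd t = (\<Sum>v\<in>V. pc v t)) \<and>
     (\<forall>v\<in>V. ev_feasible T eta dt (ta v) (td v) (ea v) (ed v) (pbar v) (emin v) (emax v)
                          (pc v) (e v))"

definition in_Fc ::
  "'v set \<Rightarrow> nat \<Rightarrow> real \<Rightarrow> real \<Rightarrow> ('v \<Rightarrow> nat) \<Rightarrow> ('v \<Rightarrow> nat) \<Rightarrow> ('v \<Rightarrow> real)
   \<Rightarrow> ('v \<Rightarrow> real) \<Rightarrow> ('v \<Rightarrow> real) \<Rightarrow> ('v \<Rightarrow> real) \<Rightarrow> ('v \<Rightarrow> real)
   \<Rightarrow> (nat \<Rightarrow> real) \<Rightarrow> (nat \<Rightarrow> real) \<Rightarrow> bool" where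
  "in_Fc V T eta dt ta td ea ed pbar emin emax phat pcheck \<longleftrightarrow>
     (\<exists>hpc he cpc ce.
        disaggregates V T eta dt ta td ea ed pbar emin emax phat hpc he \<and>
        disaggregates V T eta dt ta td ea ed pbar emin emax pcheck cpc ce \<and>
        (\<forall>t\<in>{1..T}. pcheck t \<le> phat t))"

end

theory Submission
  imports Defs "HOL-Analysis.Analysis"
begin

(* The power trajectories of a single EV form a compact set P_v cut out of a box by a lower
   bound on the power summed over [ta, td) (required energy) and an upper bound on the sum over
   [ta, T) (battery capacity). Such sets have an exchange property: if q in P_v carries more power
   than p in P_v on a set R of slots, then p can be moved a little within P_v, either by raising
   one slot of R or by shifting power into R from one slot outside R.
   Among all families c_v in P_v with sum_v c_v <= p_d, choose one minimising the squared
   residual sum_t (p_d t - sum_v c_v t)^2; the lower trajectory shows that there is a family at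
   all. If the residual were not zero, then on the slots R where it is largest some EV has more
   power in the upper trajectory than in c, and its exchange move lowers the residual. *)

lemma eventually_at_right_0_mult_less:
  fixes b c :: real
  assumes "0 < b"
  shows "\<forall>\<^sub>F e in at_right 0. e * c < b"
proof -
  have "((\<lambda>e. e * c) \<longlongrightarrow> 0 * c) (at_right 0)"
    by (intro tendsto_intros)
  then show ?thesis using assms by (simp add: order_tendstoD(2))
qed

lemma eventually_at_right_0_le_add_mult:
  fixes a b c :: real
  assumes "b \<le> a" and "0 \<le> c \<or> b < a"
  shows "\<forall>\<^sub>F e in at_right 0. b \<le> a + e * c"
  using assms(2)
proof
  assume "0 \<le> c"
  then show ?thesis
    using assms(1) by (intro eventually_mono[OF eventually_at_right_less]) (simp add: add_increasing2)
next
  assume "b < a"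
  then have "\<forall>\<^sub>F e in at_right 0. e * - c < a - b"
    by (intro eventually_at_right_0_mult_less) simp
  then show ?thesis
    by eventually_elim simp
qed

lemma eventually_at_right_0_add_mult_le:
  fixes a b c :: real
  assumes "a \<le> b" and "c \<le> 0 \<or> a < b"
  shows "\<forall>\<^sub>F e in at_right 0. a + e * c \<le> b"
proof -
  have "\<forall>\<^sub>F e in at_right 0. - b \<le> - a + e * - c"
    using assms by (intro eventually_at_right_0_le_add_mult) auto
  then show ?thesis
    by eventually_elim simp
qed

lemma eventually_sum_square_decrease:
  fixes d w :: "'i \<Rightarrow> real"
  assumes "0 < (\<Sum>t\<in>\<Theta>. d t * w t)"
  shows "\<forall>\<^sub>F e in at_right 0. (\<Sum>t\<in>\<Theta>. (d t - e * w t)\<^sup>2) < (\<Sum>t\<in>\<Theta>. (d t)\<^sup>2)"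
proof -
  define G where "G = (\<Sum>t\<in>\<Theta>. d t * w t)"
  define H where "H = (\<Sum>t\<in>\<Theta>. (w t)\<^sup>2)"
  have expand: "(\<Sum>t\<in>\<Theta>. (d t - e * w t)\<^sup>2) = (\<Sum>t\<in>\<Theta>. (d t)\<^sup>2) - e * (2 * G - e * H)" for e
    by (simp add: G_def H_def power2_eq_square algebra_simps sum_subtractf sum.distrib sum_distrib_left)
  have "\<forall>\<^sub>F e in at_right 0. 0 < e \<and> e * H < 2 * G"
    using assms by (intro eventually_conj eventually_at_right_less eventually_at_right_0_mult_less)
      (simp add: G_def)
  then show ?thesis
    by eventually_elim (simp add: expand)
qed

lemma sum_mult_indicator_singleton:
  fixes f :: "'a \<Rightarrow> 'b::semiring_1"
  assumes "finite A"
  shows "(\<Sum>t\<in>A. f t * indicator {a} t) = f a * indicator A a"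
proof -
  have "(\<Sum>t\<in>A. f t * indicator {a} t) = (\<Sum>t\<in>A. if t = a then f t else 0)"
    by (rule sum.cong) (auto simp: indicator_def)
  then show ?thesis
    using assms by (simp add: indicator_def)
qed

lemma sum_indicator_singleton:
  assumes "finite A"
  shows "(\<Sum>t\<in>A. indicator {a} t :: 'b::semiring_1) = indicator A a"
  using sum_mult_indicator_singleton[OF assms, of "\<lambda>_. 1"] by simp

lemma sum_le_sum_by_sign:
  fixes f :: "'a \<Rightarrow> real"
  assumes "finite A" "finite B" "\<forall>t\<in>A - B. f t \<le> 0" "\<forall>t\<in>B - A. 0 \<le> f t"
  shows "sum f A \<le> sum f B"
proof -
  have "sum f A = sum f (A \<inter> B) + sum f (A - B)" "sum f B = sum f (A \<inter> B) + sum f (B - A)"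
    using assms(1,2) by (metis sum.Int_Diff, metis Int_commute sum.Int_Diff)
  moreover have "sum f (A - B) \<le> 0" "0 \<le> sum f (B - A)"
    using assms by (auto intro: sum_nonpos sum_nonneg)
  ultimately show ?thesis by linarith
qed

lemma pos_column_sums_imp_pos_row_sum:
  fixes f :: "'v \<Rightarrow> 'i \<Rightarrow> real"
  assumes "finite R" "R \<noteq> {}" "\<forall>t\<in>R. 0 < (\<Sum>v\<in>V. f v t)"
  shows "\<exists>v\<in>V. 0 < (\<Sum>t\<in>R. f v t)"
proof (rule ccontr)
  assume "\<not> ?thesis"
  then have "(\<Sum>v\<in>V. \<Sum>t\<in>R. f v t) \<le> 0"
    using sum_nonpos[of V "\<lambda>v. \<Sum>t\<in>R. f v t"] by (simp add: not_less)
  moreover have "0 < (\<Sum>t\<in>R. \<Sum>v\<in>V. f v t)"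
    using assms sum_pos[of R "\<lambda>t. \<Sum>v\<in>V. f v t"] by simp
  ultimately show False
    by (simp add: sum.swap[of _ V R])
qed

lemma continuous_on_coordinate:
  "continuous_on S (\<lambda>x :: 'a \<Rightarrow> 'b::topological_space. x i)"
  by (rule continuous_on_product_then_coordinatewise[OF continuous_on_id])

lemma continuous_on_coordinate2:
  "continuous_on S (\<lambda>x :: 'a \<Rightarrow> 'b \<Rightarrow> 'c::topological_space. x i j)"
  by (rule continuous_on_product_then_coordinatewise[OF continuous_on_coordinate])

definition box_sum_bounds ::
  "('i \<Rightarrow> real) \<Rightarrow> ('i \<Rightarrow> real) \<Rightarrow> 'i set \<Rightarrow> real \<Rightarrow> 'i set \<Rightarrow> real \<Rightarrow> ('i \<Rightarrow> real) set" where
  "box_sum_bounds lo hi I \<alpha> J \<beta> =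
     {p. (\<forall>t. lo t \<le> p t \<and> p t \<le> hi t) \<and> \<alpha> \<le> sum p I \<and> sum p J \<le> \<beta>}"

lemma box_sum_bounds_feasible_direction:
  assumes p: "p \<in> box_sum_bounds lo hi I \<alpha> J \<beta>"
    and fin: "finite I" "finite J" "finite {t. w t \<noteq> 0}"
    and up: "\<And>t. 0 < w t \<Longrightarrow> p t < hi t" and down: "\<And>t. w t < 0 \<Longrightarrow> lo t < p t"
    and I: "0 \<le> sum w I \<or> \<alpha> < sum p I" and J: "sum w J \<le> 0 \<or> sum p J < \<beta>"
  shows "\<forall>\<^sub>F e in at_right 0. (\<lambda>t. p t + e * w t) \<in> box_sum_bounds lo hi I \<alpha> J \<beta>"
proof -
  have box: "lo t \<le> p t" "p t \<le> hi t" for t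
    using p by (auto simp: box_sum_bounds_def)
  have "\<forall>\<^sub>F e in at_right 0. lo t \<le> p t + e * w t \<and> p t + e * w t \<le> hi t" for t
  proof (intro eventually_conj)
    show "\<forall>\<^sub>F e in at_right 0. lo t \<le> p t + e * w t"
      using box(1) down[of t] by (intro eventually_at_right_0_le_add_mult) force+
    show "\<forall>\<^sub>F e in at_right 0. p t + e * w t \<le> hi t"
      using box(2) up[of t] by (intro eventually_at_right_0_add_mult_le) force+
  qed
  then have "\<forall>\<^sub>F e in at_right 0. \<forall>t\<in>{t. w t \<noteq> 0}. lo t \<le> p t + e * w t \<and> p t + e * w t \<le> hi t"
    by (intro eventually_ball_finite fin(3) ballI)
  moreover have "\<forall>\<^sub>F e in at_right 0. \<alpha> \<le> sum p I + e * sum w I"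
    using p I by (intro eventually_at_right_0_le_add_mult) (auto simp: box_sum_bounds_def)
  moreover have "\<forall>\<^sub>F e in at_right 0. sum p J + e * sum w J \<le> \<beta>"
    using p J by (intro eventually_at_right_0_add_mult_le) (auto simp: box_sum_bounds_def)
  ultimately show ?thesis
  proof eventually_elim
    case (elim e)
    have "lo t \<le> p t + e * w t \<and> p t + e * w t \<le> hi t" for t
      using elim(1) box[of t] by (cases "w t = 0") auto
    then show ?case
      using elim(2,3) by (simp add: box_sum_bounds_def sum.distrib sum_distrib_left)
  qed
qed

lemma box_sum_bounds_transfer:
  assumes p: "p \<in> box_sum_bounds lo hi I \<alpha> J \<beta>" and fin: "finite I" "finite J"
    and t0: "p t0 < hi t0" and t1: "s = 0 \<or> s = 1 \<and> t1 \<noteq> t0 \<and> lo t1 < p t1"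
    and I: "0 \<le> indicator I t0 - s * indicator I t1 \<or> \<alpha> < sum p I"
    and J: "indicator J t0 - s * indicator J t1 \<le> 0 \<or> sum p J < \<beta>"
  shows "\<forall>\<^sub>F e in at_right 0.
    (\<lambda>t. p t + e * (indicator {t0} t - s * indicator {t1} t)) \<in> box_sum_bounds lo hi I \<alpha> J \<beta>"
proof (rule box_sum_bounds_feasible_direction[OF p fin])
  have "(\<Sum>t\<in>A. indicator {t0} t - s * indicator {t1} t) = indicator A t0 - s * indicator A t1"
    if "finite A" for A
    using that by (simp add: sum_subtractf sum_indicator_singleton flip: sum_distrib_left)
  with I J fin show
    "0 \<le> (\<Sum>t\<in>I. indicator {t0} t - s * indicator {t1} t) \<or> \<alpha> < sum p I"
    "(\<Sum>t\<in>J. indicator {t0} t - s * indicator {t1} t) \<le> 0 \<or> sum p J < \<beta>"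
    by simp_all
  show "finite {t. indicator {t0} t - s * indicator {t1} t \<noteq> (0::real)}"
    by (auto intro: finite_subset[of _ "{t0, t1}"] simp: indicator_def)
  fix t
  show "p t < hi t" if "0 < indicator {t0} t - s * indicator {t1} t"
    using that t0 t1 by (auto simp: indicator_def split: if_splits)
  show "lo t < p t" if "indicator {t0} t - s * indicator {t1} t < 0"
    using that t0 t1 by (auto simp: indicator_def of_bool_def split: if_splits)
qed

lemma compact_box_sum_bounds: "compact (box_sum_bounds lo hi I \<alpha> J \<beta>)"
proof -
  have "compact (Pi\<^sub>E UNIV (\<lambda>t. {lo t..hi t}))"
    using compactin_PiE[of "\<lambda>_. euclidean" UNIV "\<lambda>t. {lo t..hi t}"]
    by (simp add: euclidean_product_topology)
  moreover have "closed {p. \<alpha> \<le> sum p I}" "closed {p. sum p J \<le> \<beta>}"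
    by (intro closed_Collect_le continuous_intros continuous_on_coordinate)+
  moreover have "box_sum_bounds lo hi I \<alpha> J \<beta> =
      Pi\<^sub>E UNIV (\<lambda>t. {lo t..hi t}) \<inter> {p. \<alpha> \<le> sum p I} \<inter> {p. sum p J \<le> \<beta>}"
    by (auto simp: box_sum_bounds_def)
  ultimately show ?thesis
    by (simp add: compact_Int_closed closed_Int)
qed

(* s = 0: raise slot t0 of R; s = 1: shift power from a slot t1 outside R to t0. *)
definition exchange_property :: "('i \<Rightarrow> real) set \<Rightarrow> bool" where
  "exchange_property S \<longleftrightarrow>
     (\<forall>p\<in>S. \<forall>q\<in>S. \<forall>R. finite R \<and> 0 < (\<Sum>t\<in>R. q t - p t) \<longrightarrow>
        (\<exists>t0\<in>R. \<exists>t1 s. (s = 0 \<or> s = 1 \<and> t1 \<notin> R) \<and>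
           (\<forall>\<^sub>F e in at_right 0. (\<lambda>t. p t + e * (indicator {t0} t - s * indicator {t1} t)) \<in> S)))"

(* If no move from p is possible, the sum constraints of p are tight, and the sum of q - p over R
   is dominated by its sum over J, or over J - I, both of which are nonpositive. *)
lemma box_sum_bounds_blocked_sum_nonpos:
  assumes p: "p \<in> box_sum_bounds lo hi I \<alpha> J \<beta>" and q: "q \<in> box_sum_bounds lo hi I \<alpha> J \<beta>"
    and fin: "finite R" "finite J" and "I \<subseteq> J"
    and raise: "\<forall>t\<in>R. p t < q t \<longrightarrow> t \<in> J \<and> \<beta> \<le> sum p J"
    and shift: "\<forall>t0\<in>R. \<forall>t1\<in>J - R. p t0 < q t0 \<longrightarrow> q t1 < p t1 \<longrightarrow> t1 \<in> I \<and> t0 \<notin> I \<and> sum p I \<le> \<alpha>"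
  shows "(\<Sum>t\<in>R. q t - p t) \<le> 0"
proof (cases "\<exists>t\<in>R. p t < q t")
  case False
  then show ?thesis by (intro sum_nonpos) (simp add: not_less)
next
  case True
  define D where "D t = q t - p t" for t
  have "(\<Sum>t\<in>J. D t) \<le> 0"
    using True raise p q by (force simp: D_def sum_subtractf box_sum_bounds_def)
  show ?thesis
  proof (cases "\<exists>t\<in>J - R. q t < p t")
    case False
    then have "sum D R \<le> sum D J"
      using fin raise by (intro sum_le_sum_by_sign) (auto simp: D_def not_less)
    with \<open>sum D J \<le> 0\<close> show ?thesis by (simp add: D_def)
  next
    case True
    then obtain t1 where "t1 \<in> J - R" "q t1 < p t1" by blast
    obtain t0 where "t0 \<in> R" "p t0 < q t0" using \<open>\<exists>t\<in>R. p t < q t\<close> by blast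
    have "sum p I = \<alpha>"
      using shift \<open>t0 \<in> R\<close> \<open>p t0 < q t0\<close> \<open>t1 \<in> J - R\<close> \<open>q t1 < p t1\<close> p
      by (force simp: box_sum_bounds_def)
    with q have "0 \<le> sum D I"
      by (simp add: D_def sum_subtractf box_sum_bounds_def)
    with \<open>sum D J \<le> 0\<close> \<open>I \<subseteq> J\<close> fin(2) have "sum D (J - I) \<le> 0"
      by (simp add: sum_diff)
    have up_blocked: "\<not> p t < q t" if "t \<in> R" "t \<notin> J - I" for t
      using raise shift that \<open>t1 \<in> J - R\<close> \<open>q t1 < p t1\<close> by blast
    have down_blocked: "\<not> q t < p t" if "t \<in> J - I" "t \<notin> R" for t
      using shift that \<open>t0 \<in> R\<close> \<open>p t0 < q t0\<close> by blast
    have "sum D R \<le> sum D (J - I)"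
      using fin up_blocked down_blocked by (intro sum_le_sum_by_sign) (auto simp: D_def not_less)
    with \<open>sum D (J - I) \<le> 0\<close> show ?thesis by (simp add: D_def)
  qed
qed

lemma box_sum_bounds_exchange:
  assumes "finite J" "I \<subseteq> J"
  shows "exchange_property (box_sum_bounds lo hi I \<alpha> J \<beta>)"
  unfolding exchange_property_def
proof (intro ballI allI impI)
  let ?S = "box_sum_bounds lo hi I \<alpha> J \<beta>"
  fix p q R
  assume p: "p \<in> ?S" and q: "q \<in> ?S" and R: "finite R \<and> 0 < (\<Sum>t\<in>R. q t - p t)"
  have "finite I" using assms finite_subset by blast
  have room: "p t < q t \<Longrightarrow> p t < hi t" "q t < p t \<Longrightarrow> lo t < p t" for t
    using q by (auto simp: box_sum_bounds_def intro: less_le_trans le_less_trans)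
  show "\<exists>t0\<in>R. \<exists>t1 s. (s = 0 \<or> s = 1 \<and> t1 \<notin> R) \<and>
      (\<forall>\<^sub>F e in at_right 0. (\<lambda>t. p t + e * (indicator {t0} t - s * indicator {t1} t)) \<in> ?S)"
  proof (rule ccontr)
    assume none: "\<not> ?thesis"
    have "\<forall>t\<in>R. p t < q t \<longrightarrow> t \<in> J \<and> \<beta> \<le> sum p J"
    proof (intro ballI impI, rule ccontr)
      fix t0 assume "t0 \<in> R" "p t0 < q t0" "\<not> (t0 \<in> J \<and> \<beta> \<le> sum p J)"
      then have "\<forall>\<^sub>F e in at_right 0. (\<lambda>t. p t + e * (indicator {t0} t - 0 * indicator {t0} t)) \<in> ?S"
        using room by (intro box_sum_bounds_transfer[OF p \<open>finite I\<close> \<open>finite J\<close>]) auto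
      with none \<open>t0 \<in> R\<close> show False by blast
    qed
    moreover have "\<forall>t0\<in>R. \<forall>t1\<in>J - R. p t0 < q t0 \<longrightarrow> q t1 < p t1 \<longrightarrow> t1 \<in> I \<and> t0 \<notin> I \<and> sum p I \<le> \<alpha>"
    proof (intro ballI impI, rule ccontr)
      fix t0 t1 assume "t0 \<in> R" "t1 \<in> J - R" "p t0 < q t0" "q t1 < p t1"
        and "\<not> (t1 \<in> I \<and> t0 \<notin> I \<and> sum p I \<le> \<alpha>)"
      then have "\<forall>\<^sub>F e in at_right 0. (\<lambda>t. p t + e * (indicator {t0} t - 1 * indicator {t1} t)) \<in> ?S"
        using room by (intro box_sum_bounds_transfer[OF p \<open>finite I\<close> \<open>finite J\<close>]) auto
      with none \<open>t0 \<in> R\<close> \<open>t1 \<in> J - R\<close> show False by blast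
    qed
    ultimately have "(\<Sum>t\<in>R. q t - p t) \<le> 0"
      using R assms by (intro box_sum_bounds_blocked_sum_nonpos[OF p q]) auto
    with R show False by simp
  qed
qed

definition squared_residual :: "'v set \<Rightarrow> 'i set \<Rightarrow> ('i \<Rightarrow> real) \<Rightarrow> ('v \<Rightarrow> 'i \<Rightarrow> real) \<Rightarrow> real" where
  "squared_residual V \<Theta> y c = (\<Sum>t\<in>\<Theta>. (y t - (\<Sum>v\<in>V. c v t))\<^sup>2)"

lemma squared_residual_update_descent:
  fixes S :: "'v \<Rightarrow> ('i \<Rightarrow> real) set" and w :: "'i \<Rightarrow> real"
  assumes fin: "finite V" and v: "v \<in> V"
    and c: "\<forall>u\<in>V. c u \<in> S u" and below: "\<forall>t\<in>\<Theta>. (\<Sum>u\<in>V. c u t) \<le> y t"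
    and move: "\<forall>\<^sub>F e in at_right 0. (\<lambda>t. c v t + e * w t) \<in> S v"
    and w: "\<forall>t. t \<noteq> t0 \<longrightarrow> w t \<le> 0" "w t0 \<le> 1" and t0: "(\<Sum>u\<in>V. c u t0) < y t0"
    and descent: "0 < (\<Sum>t\<in>\<Theta>. (y t - (\<Sum>u\<in>V. c u t)) * w t)"
  obtains c' where "\<forall>u\<in>V. c' u \<in> S u" "\<forall>u. u \<notin> V \<longrightarrow> c' u = c u"
    "\<forall>t\<in>\<Theta>. (\<Sum>u\<in>V. c' u t) \<le> y t" "squared_residual V \<Theta> y c' < squared_residual V \<Theta> y c"
proof -
  define d where "d t = y t - (\<Sum>u\<in>V. c u t)" for t
  have "\<forall>\<^sub>F e in at_right 0. (\<Sum>t\<in>\<Theta>. (d t - e * w t)\<^sup>2) < (\<Sum>t\<in>\<Theta>. (d t)\<^sup>2)"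
    using descent unfolding d_def by (rule eventually_sum_square_decrease)
  moreover have "\<forall>\<^sub>F e in at_right 0. 0 < e \<and> e < d t0"
    using t0 eventually_at_right_0_mult_less[of "d t0" 1]
    by (intro eventually_conj eventually_at_right_less) (simp_all add: d_def)
  ultimately have "\<forall>\<^sub>F e in at_right 0. (\<Sum>t\<in>\<Theta>. (d t - e * w t)\<^sup>2) < (\<Sum>t\<in>\<Theta>. (d t)\<^sup>2) \<and>
      (\<lambda>t. c v t + e * w t) \<in> S v \<and> 0 < e \<and> e < d t0"
    using move by eventually_elim blast
  then obtain e where e: "(\<Sum>t\<in>\<Theta>. (d t - e * w t)\<^sup>2) < (\<Sum>t\<in>\<Theta>. (d t)\<^sup>2)"
    "(\<lambda>t. c v t + e * w t) \<in> S v" "0 < e" "e < d t0"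
    using eventually_happens'[OF trivial_limit_at_right_real] by blast
  define c' where "c' = c(v := (\<lambda>t. c v t + e * w t))"
  have sum_c': "(\<Sum>u\<in>V. c' u t) = (\<Sum>u\<in>V. c u t) + e * w t" for t
    using fin v by (simp add: c'_def sum.remove)
  show ?thesis
  proof (rule that[of c'])
    show "\<forall>u\<in>V. c' u \<in> S u" "\<forall>u. u \<notin> V \<longrightarrow> c' u = c u"
      using c e(2) v by (auto simp: c'_def)
    have "e * w t \<le> d t" if "t \<in> \<Theta>" for t
    proof (cases "t = t0")
      case True
      with w(2) e(3) have "e * w t \<le> e" by (simp add: mult_left_le)
      with e(4) True show ?thesis by simp
    next
      case False
      with w(1) e(3) have "e * w t \<le> 0" by (simp add: mult_nonneg_nonpos)
      moreover have "(\<Sum>u\<in>V. c u t) \<le> y t" using below that by blast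
      ultimately show ?thesis by (simp add: d_def)
    qed
    then show "\<forall>t\<in>\<Theta>. (\<Sum>u\<in>V. c' u t) \<le> y t"
      by (simp add: sum_c' d_def algebra_simps)
    have "squared_residual V \<Theta> y c' = (\<Sum>t\<in>\<Theta>. (d t - e * w t)\<^sup>2)"
      by (simp add: squared_residual_def sum_c' d_def algebra_simps)
    moreover have "squared_residual V \<Theta> y c = (\<Sum>t\<in>\<Theta>. (d t)\<^sup>2)"
      by (simp add: squared_residual_def d_def)
    ultimately show "squared_residual V \<Theta> y c' < squared_residual V \<Theta> y c"
      using e(1) by simp
  qed
qed

lemma squared_residual_descent:
  fixes S :: "'v \<Rightarrow> ('i \<Rightarrow> real) set"
  assumes fin: "finite V" "finite \<Theta>"
    and exch: "\<forall>v\<in>V. exchange_property (S v)"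
    and c: "\<forall>v\<in>V. c v \<in> S v" and b: "\<forall>v\<in>V. b v \<in> S v"
    and below: "\<forall>t\<in>\<Theta>. (\<Sum>v\<in>V. c v t) \<le> y t" and above: "\<forall>t\<in>\<Theta>. y t \<le> (\<Sum>v\<in>V. b v t)"
    and gap: "\<exists>t\<in>\<Theta>. (\<Sum>v\<in>V. c v t) \<noteq> y t"
  obtains c' where "\<forall>v\<in>V. c' v \<in> S v" "\<forall>v. v \<notin> V \<longrightarrow> c' v = c v"
    "\<forall>t\<in>\<Theta>. (\<Sum>v\<in>V. c' v t) \<le> y t" "squared_residual V \<Theta> y c' < squared_residual V \<Theta> y c"
proof -
  define d where "d t = y t - (\<Sum>v\<in>V. c v t)" for t
  define M where "M = Max (d ` \<Theta>)"
  define R where "R = {t\<in>\<Theta>. d t = M}"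
  have d_nonneg: "0 \<le> d t" if "t \<in> \<Theta>" for t
    using below that by (simp add: d_def)
  have d_le_M: "d t \<le> M" if "t \<in> \<Theta>" for t
    using fin(2) that by (simp add: M_def)
  have "0 < M"
    using gap d_nonneg d_le_M by (force simp: d_def)
  have "\<Theta> \<noteq> {}" using gap by blast
  then have "M \<in> d ` \<Theta>"
    using fin(2) by (simp add: M_def)
  then have "finite R" "R \<noteq> {}"
    using fin(2) by (auto simp: R_def)
  moreover have "\<forall>t\<in>R. 0 < (\<Sum>v\<in>V. b v t - c v t)"
    using above \<open>0 < M\<close> by (force simp: R_def d_def sum_subtractf)
  ultimately obtain v where v: "v \<in> V" "0 < (\<Sum>t\<in>R. b v t - c v t)"
    using pos_column_sums_imp_pos_row_sum[where f = "\<lambda>v t. b v t - c v t"] by blast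
  then obtain t0 t1 s where t0: "t0 \<in> R" and s: "s = 0 \<or> s = 1 \<and> t1 \<notin> R"
    and move: "\<forall>\<^sub>F e in at_right 0. (\<lambda>t. c v t + e * (indicator {t0} t - s * indicator {t1} t)) \<in> S v"
    using exch b c \<open>finite R\<close> unfolding exchange_property_def by blast
  define w where "w t = indicator {t0} t - s * indicator {t1} t" for t
  have "(\<Sum>t\<in>\<Theta>. d t * w t) = (\<Sum>t\<in>\<Theta>. d t * indicator {t0} t) - s * (\<Sum>t\<in>\<Theta>. d t * indicator {t1} t)"
    by (simp add: w_def right_diff_distrib sum_subtractf sum_distrib_left mult.left_commute)
  also have "\<dots> = M - s * d t1 * indicator \<Theta> t1"
    using t0 fin(2) by (simp only: sum_mult_indicator_singleton) (simp add: R_def)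
  moreover have "s * d t1 * indicator \<Theta> t1 < M"
    using s \<open>0 < M\<close> d_le_M by (fastforce simp: R_def indicator_def)
  ultimately have descent: "0 < (\<Sum>t\<in>\<Theta>. (y t - (\<Sum>u\<in>V. c u t)) * w t)"
    by (simp add: d_def)
  have w: "\<forall>t. t \<noteq> t0 \<longrightarrow> w t \<le> 0" "w t0 \<le> 1"
    using s by (auto simp: w_def indicator_def)
  have gap_t0: "(\<Sum>u\<in>V. c u t0) < y t0"
    using t0 \<open>0 < M\<close> by (simp add: R_def d_def)
  have move_w: "\<forall>\<^sub>F e in at_right 0. (\<lambda>t. c v t + e * w t) \<in> S v"
    using move by (simp add: w_def)
  obtain c' where "\<forall>u\<in>V. c' u \<in> S u" "\<forall>u. u \<notin> V \<longrightarrow> c' u = c u"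
    "\<forall>t\<in>\<Theta>. (\<Sum>u\<in>V. c' u t) \<le> y t" "squared_residual V \<Theta> y c' < squared_residual V \<Theta> y c"
    by (rule squared_residual_update_descent[OF fin(1) v(1) c below move_w w gap_t0 descent])
  then show ?thesis by (rule that)
qed

lemma exists_decomposition_between_sums:
  fixes S :: "'v \<Rightarrow> ('i \<Rightarrow> real) set"
  assumes fin: "finite V" "finite \<Theta>"
    and S: "\<forall>v\<in>V. compact (S v) \<and> exchange_property (S v)"
    and a: "\<forall>v\<in>V. a v \<in> S v" and b: "\<forall>v\<in>V. b v \<in> S v"
    and between: "\<forall>t\<in>\<Theta>. (\<Sum>v\<in>V. a v t) \<le> y t \<and> y t \<le> (\<Sum>v\<in>V. b v t)"
  shows "\<exists>c. (\<forall>v\<in>V. c v \<in> S v) \<and> (\<forall>t\<in>\<Theta>. (\<Sum>v\<in>V. c v t) = y t)"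
proof -
  define F where "F = Pi\<^sub>E UNIV (\<lambda>v. if v \<in> V then S v else {\<lambda>_. 0}) \<inter>
      {c. \<forall>t\<in>\<Theta>. (\<Sum>v\<in>V. c v t) \<le> y t}"
  have "compact (Pi\<^sub>E UNIV (\<lambda>v. if v \<in> V then S v else {\<lambda>_. 0}))"
    using compactin_PiE[of "\<lambda>_. euclidean" UNIV "\<lambda>v. if v \<in> V then S v else {\<lambda>_. 0}"] S
    by (simp add: euclidean_product_topology)
  moreover have "closed {c. \<forall>t\<in>\<Theta>. (\<Sum>v\<in>V. c v t) \<le> y t}"
    unfolding Collect_ball_eq
    by (intro closed_INT ballI closed_Collect_le continuous_intros continuous_on_coordinate2)
  ultimately have "compact F"
    by (simp add: F_def compact_Int_closed)
  have "(\<lambda>v. if v \<in> V then a v else (\<lambda>_. 0)) \<in> F"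
    using a between by (auto simp: F_def PiE_iff)
  then have "F \<noteq> {}" by blast
  moreover have "continuous_on F (squared_residual V \<Theta> y)"
    unfolding squared_residual_def
    by (intro continuous_intros continuous_on_coordinate2)
  ultimately obtain c where "c \<in> F"
    and c_min: "\<forall>c'\<in>F. squared_residual V \<Theta> y c \<le> squared_residual V \<Theta> y c'"
    using continuous_attains_inf[OF \<open>compact F\<close>] by blast
  then have c: "\<forall>v\<in>V. c v \<in> S v" "\<forall>v. v \<notin> V \<longrightarrow> c v = (\<lambda>_. 0)"
    "\<forall>t\<in>\<Theta>. (\<Sum>v\<in>V. c v t) \<le> y t"
    by (auto simp: F_def split: if_splits)
  have "\<forall>t\<in>\<Theta>. (\<Sum>v\<in>V. c v t) = y t"
  proof (rule ccontr)
    assume "\<not> ?thesis"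
    then obtain c' where "\<forall>v\<in>V. c' v \<in> S v" "\<forall>v. v \<notin> V \<longrightarrow> c' v = c v"
      "\<forall>t\<in>\<Theta>. (\<Sum>v\<in>V. c' v t) \<le> y t" "squared_residual V \<Theta> y c' < squared_residual V \<Theta> y c"
      using squared_residual_descent[OF fin _ c(1) b c(3)] S between by blast
    then have "c' \<in> F" "squared_residual V \<Theta> y c' < squared_residual V \<Theta> y c"
      using c(2) by (auto simp: F_def)
    with c_min show False by fastforce
  qed
  with c(1) show ?thesis by blast
qed

(* With k = eta * dt the
   energy at slot t is ea + k * (sum of the powers over [ta, t)), so the requirement at td bounds
   the sum over [ta, td) from below, and as powers are nonnegative the capacity bound is tightest
   at slot T. The lower energy bound amounts to emin <= ea and is kept separately. *)
definition charging_powers ::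
  "nat \<Rightarrow> real \<Rightarrow> nat \<Rightarrow> nat \<Rightarrow> real \<Rightarrow> real \<Rightarrow> real \<Rightarrow> real \<Rightarrow> (nat \<Rightarrow> real) set" where
  "charging_powers T k ta td ea ed pbar emax =
     box_sum_bounds (\<lambda>_. 0) (\<lambda>t. if t \<in> {ta..td} then pbar else 0)
       {ta..<td} ((ed - ea) / k) {ta..<T} ((emax - ea) / k)"

lemma ev_feasible_energy:
  assumes feas: "ev_feasible T eta dt ta td ea ed pbar emin emax pc e"
    and "1 \<le> ta" "ta \<le> t" "t \<le> T"
  shows "e t = ea + eta * dt * sum pc {ta..<t}"
  using assms(3,4)
proof (induction t rule: dec_induct)
  case base
  then show ?case using feas by (simp add: ev_feasible_def)
next
  case (step n)
  then have "e (n + 1) = e n + eta * pc n * dt"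
    using feas \<open>1 \<le> ta\<close> by (simp add: ev_feasible_def)
  with step show ?case by (simp add: algebra_simps)
qed

lemma ev_feasible_imp_charging_powers:
  assumes feas: "ev_feasible T eta dt ta td ea ed pbar emin emax pc e"
    and win: "1 \<le> ta" "ta \<le> td" "td \<le> T" and k: "0 < eta * dt"
  shows "emin \<le> ea"
    and "\<exists>p\<in>charging_powers T (eta * dt) ta td ea ed pbar emax. \<forall>t\<in>{1..T}. p t = pc t"
proof -
  have "ta \<in> {1..T}" using win by simp
  with feas show "emin \<le> ea" unfolding ev_feasible_def by metis
  define p where "p t = (if t \<in> {ta..td} then pc t else 0)" for t
  have p_pc: "\<forall>t\<in>{1..T}. p t = pc t"
    using feas by (auto simp: p_def ev_feasible_def)
  have sum_p: "sum p {ta..<t} = sum pc {ta..<t}" if "t \<le> T" for t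
    using that win p_pc by (intro sum.cong) auto
  have "ed \<le> e td" "e T \<le> emax"
    using feas win by (auto simp: ev_feasible_def)
  then have "ed \<le> ea + eta * dt * sum p {ta..<td}" "ea + eta * dt * sum p {ta..<T} \<le> emax"
    using ev_feasible_energy[OF feas, of td] ev_feasible_energy[OF feas, of T] win sum_p by auto
  then have "p \<in> charging_powers T (eta * dt) ta td ea ed pbar emax"
    using feas k
    by (auto simp: charging_powers_def box_sum_bounds_def p_def ev_feasible_def
        pos_divide_le_eq pos_le_divide_eq algebra_simps)
  with p_pc show "\<exists>p\<in>charging_powers T (eta * dt) ta td ea ed pbar emax. \<forall>t\<in>{1..T}. p t = pc t"
    by blast
qed

lemma charging_powers_imp_ev_feasible:
  assumes p: "p \<in> charging_powers T (eta * dt) ta td ea ed pbar emax"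
    and k: "0 < eta * dt" and "emin \<le> ea"
  shows "ev_feasible T eta dt ta td ea ed pbar emin emax p (\<lambda>t. ea + eta * dt * sum p {ta..<t})"
proof -
  have box: "0 \<le> p t" "p t \<le> (if t \<in> {ta..td} then pbar else 0)" for t
    using p by (auto simp: charging_powers_def box_sum_bounds_def)
  then have inside: "p t \<le> pbar" if "t \<in> {ta..td}" for t
    using that by (metis (full_types))
  have sums: "ed \<le> ea + eta * dt * sum p {ta..<td}" "ea + eta * dt * sum p {ta..<T} \<le> emax"
    using p k by (auto simp: charging_powers_def box_sum_bounds_def pos_divide_le_eq pos_le_divide_eq
        algebra_simps)
  have outside: "p t = 0" if "t \<notin> {ta..td}" for t
    using box[of t] that by (simp split: if_splits)
  have step: "sum p {ta..<t + 1} = sum p {ta..<t} + p t" for t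
    using outside[of t] by (cases "ta \<le> t") auto
  have bounds: "emin \<le> ea + eta * dt * sum p {ta..<t} \<and> ea + eta * dt * sum p {ta..<t} \<le> emax"
    if "t \<le> T" for t
  proof
    have "0 \<le> sum p {ta..<t}" "sum p {ta..<t} \<le> sum p {ta..<T}"
      using box that by (auto intro: sum_nonneg sum_mono2)
    then have "0 \<le> eta * dt * sum p {ta..<t}" "eta * dt * sum p {ta..<t} \<le> eta * dt * sum p {ta..<T}"
      using k by (auto intro: mult_left_mono)
    then show "emin \<le> ea + eta * dt * sum p {ta..<t}" "ea + eta * dt * sum p {ta..<t} \<le> emax"
      using sums(2) \<open>emin \<le> ea\<close> by linarith+
  qed
  show ?thesis
    unfolding ev_feasible_def
  proof (intro conjI ballI impI)
    fix t
    show "ea + eta * dt * sum p {ta..<t + 1} = ea + eta * dt * sum p {ta..<t} + eta * p t * dt"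
      by (simp only: step) (simp add: algebra_simps)
  qed (use box(1) inside sums(1) bounds outside in auto)
qed

lemma disaggregates_imp_charging_powers:
  assumes dis: "disaggregates V T eta dt ta td ea ed pbar emin emax P pc e"
    and win: "\<forall>v\<in>V. 1 \<le> ta v \<and> ta v \<le> td v \<and> td v \<le> T" and k: "0 < eta * dt"
  obtains p where "\<forall>v\<in>V. p v \<in> charging_powers T (eta * dt) (ta v) (td v) (ea v) (ed v) (pbar v) (emax v)"
    and "\<forall>t\<in>{1..T}. (\<Sum>v\<in>V. p v t) = P t" and "\<forall>v\<in>V. emin v \<le> ea v"
proof -
  have feas: "ev_feasible T eta dt (ta v) (td v) (ea v) (ed v) (pbar v) (emin v) (emax v) (pc v) (e v)"
    if "v \<in> V" for v
    using dis that by (simp add: disaggregates_def)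
  have "\<forall>v\<in>V. \<exists>q. q \<in> charging_powers T (eta * dt) (ta v) (td v) (ea v) (ed v) (pbar v) (emax v) \<and>
      (\<forall>t\<in>{1..T}. q t = pc v t)"
    using ev_feasible_imp_charging_powers(2)[OF feas] win k by blast
  then obtain p where p: "\<forall>v\<in>V. p v \<in> charging_powers T (eta * dt) (ta v) (td v) (ea v) (ed v) (pbar v) (emax v) \<and>
      (\<forall>t\<in>{1..T}. p v t = pc v t)"
    by (metis bchoice)
  show ?thesis
  proof (rule that)
    show "\<forall>t\<in>{1..T}. (\<Sum>v\<in>V. p v t) = P t"
      using p dis by (simp add: disaggregates_def)
    show "\<forall>v\<in>V. emin v \<le> ea v"
      using ev_feasible_imp_charging_powers(1)[OF feas] win k by blast
  qed (use p in blast)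
qed

lemma charging_powers_imp_disaggregates:
  assumes "\<forall>v\<in>V. p v \<in> charging_powers T (eta * dt) (ta v) (td v) (ea v) (ed v) (pbar v) (emax v)"
    and "\<forall>t\<in>{1..T}. (\<Sum>v\<in>V. p v t) = P t" and "\<forall>v\<in>V. emin v \<le> ea v" and "0 < eta * dt"
  shows "disaggregates V T eta dt ta td ea ed pbar emin emax P p
    (\<lambda>v t. ea v + eta * dt * sum (p v) {ta v..<t})"
  using assms charging_powers_imp_ev_feasible unfolding disaggregates_def by auto

theorem proposition1:
  fixes V :: "'v set" and T :: nat and eta dt :: real
    and ta td :: "'v \<Rightarrow> nat" and ea ed pbar emin emax :: "'v \<Rightarrow> real"
    and phat pcheck pd :: "nat \<Rightarrow> real"
  assumes "finite V"
    and "eta > 0" and "dt > 0"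
    and "\<forall>v\<in>V. 1 \<le> ta v \<and> ta v \<le> td v \<and> td v \<le> T"
    and "\<forall>v\<in>V. pbar v \<ge> 0 \<and> emin v \<le> emax v"
    and "in_Fc V T eta dt ta td ea ed pbar emin emax phat pcheck"
    and "\<forall>t\<in>{1..T}. pcheck t \<le> pd t \<and> pd t \<le> phat t"
  shows "\<exists>pc e. disaggregates V T eta dt ta td ea ed pbar emin emax pd pc e"
proof -
  obtain hpc he cpc ce where
      upper: "disaggregates V T eta dt ta td ea ed pbar emin emax phat hpc he"
    and lower: "disaggregates V T eta dt ta td ea ed pbar emin emax pcheck cpc ce"
    using assms(6) unfolding in_Fc_def by blast
  have k: "0 < eta * dt" using assms(2,3) by simp
  define S where "S v = charging_powers T (eta * dt) (ta v) (td v) (ea v) (ed v) (pbar v) (emax v)" for v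
  obtain a where a: "\<forall>v\<in>V. a v \<in> S v" "\<forall>t\<in>{1..T}. (\<Sum>v\<in>V. a v t) = pcheck t"
    and ea_bound: "\<forall>v\<in>V. emin v \<le> ea v"
    unfolding S_def by (rule disaggregates_imp_charging_powers[OF lower assms(4) k])
  obtain b where b: "\<forall>v\<in>V. b v \<in> S v" "\<forall>t\<in>{1..T}. (\<Sum>v\<in>V. b v t) = phat t"
    unfolding S_def by (rule disaggregates_imp_charging_powers[OF upper assms(4) k])
  have "\<forall>v\<in>V. compact (S v) \<and> exchange_property (S v)"
    using assms(4) by (auto simp: S_def charging_powers_def compact_box_sum_bounds
        intro!: box_sum_bounds_exchange)
  moreover have "\<forall>t\<in>{1..T}. (\<Sum>v\<in>V. a v t) \<le> pd t \<and> pd t \<le> (\<Sum>v\<in>V. b v t)"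
    using a(2) b(2) assms(7) by simp
  ultimately obtain c where "\<forall>v\<in>V. c v \<in> S v" "\<forall>t\<in>{1..T}. (\<Sum>v\<in>V. c v t) = pd t"
    using exists_decomposition_between_sums[OF assms(1) finite_atLeastAtMost _ a(1) b(1)] by blast
  then show ?thesis
    using charging_powers_imp_disaggregates[OF _ _ ea_bound k] unfolding S_def by blast
qed

end
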